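(* Let $\mathbb{F}$ be a field of characteristic zero, let $J\ge 0$ be an integer, and let $r,\ell$ be integers with $r\ge 2$ and $1\le \ell\le r$. Then for every odd integer $k\ge 2J+1$, $$\mathrm{HP}^{k}_{\ell}=\sum_{j=1}^{\ell-1} q^{(k+1)j-1}\,\mathrm{HP}^{k+2}_{r-j+1}+\sum_{j=1}^{\ell} q^{(k+1)(j-1)}\,\mathrm{HP}^{k+2}_{r-j+1}.$$
   Context: For $k\ge1$ let $S_k=\mathbb{F}[x_k,x_{k+1},x_{k+2},\ldots]$, graded by weight: the monomial $x_{i_1}^{\alpha_1}\cdots x_{i_m}^{\alpha_m}$ has weight $\sum_t i_t\alpha_t$. Fix $r\ge2$. For $k\ge1$, let $L_k$ be the ideal of $S_k$ generated by the monomials $x_{2a-1}^2$ ($2a-1\ge k$), $x_{2b-1}x_{2b}^{r-1}$ ($2b-1\ge k$), $x_{2c}^{r-n_1}x_{2c+2}^{n_1}$ ($2c\ge k$, $0\le n_1\le r-1$), and $x_{2c}^{r-n_2-1}x_{2c+1}x_{2c+2}^{n_2}$ ($2c\ge k$, $0\le n_2\le r-2$), where $a,b,c$ range over integers. For $1\le \ell\le r$ define the ideal $L_k^{\ell}$ of $S_k$ as follows: if $k$ is even, $L_k^\ell$ is generated by $x_k^{\ell}$, the monomials $x_k^{\ell-t}x_{k+2}^{r-\ell+t}$ and $x_k^{\ell-t}x_{k+1}x_{k+2}^{r-\ell+t-1}$ for $t=1,\ldots,\ell-1$, and the generators of $L_{k+1}$; if $k$ is odd, $L_k^\ell$ is generated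 by $x_k^2$, $x_kx_{k+1}^{\ell-1}$, and the generators of $L_{k+1}^{\ell}$. These are homogeneous ideals. For a graded algebra $A=\bigoplus_{j\ge0}A_j$ with finite-dimensional components, its Hilbert–Poincaré series is $\sum_{j\ge0}\dim_{\mathbb{F}}(A_j)q^j$. Write $\mathrm{HP}^k_\ell$ for the Hilbert–Poincaré series of $S_k/L_k^\ell$ (a formal power series in $q$). *)

theory Defs
  imports Complex_Main "HOL-Computational_Algebra.Formal_Power_Series"
begin

text \<open>Monomials in the variables x_1, x_2, ... are exponent vectors m :: nat \<Rightarrow> nat
  (m i = exponent of x_i) with finite support.\<close>

definition monomial_in :: "nat \<Rightarrow> (nat \<Rightarrow> nat) \<Rightarrow> bool" where
  "monomial_in k m \<longleftrightarrow> finite {i. m i \<noteq> 0} \<and> (\<forall>i. m i \<noteq> 0 \<longrightarrow> k \<le> i)"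

definition weight :: "(nat \<Rightarrow> nat) \<Rightarrow> nat" where
  "weight m = (\<Sum>i\<in>{i. m i \<noteq> 0}. i * m i)"

definition mono1 :: "nat \<Rightarrow> nat \<Rightarrow> nat \<Rightarrow> nat" where
  "mono1 i a = (\<lambda>v. if v = i then a else 0)"

definition mono2 :: "nat \<Rightarrow> nat \<Rightarrow> nat \<Rightarrow> nat \<Rightarrow> nat \<Rightarrow> nat" where
  "mono2 i a j b = (\<lambda>v. mono1 i a v + mono1 j b v)"

definition mono3 :: "nat \<Rightarrow> nat \<Rightarrow> nat \<Rightarrow> nat \<Rightarrow> nat \<Rightarrow> nat \<Rightarrow> nat \<Rightarrow> nat" where
  "mono3 i a j b l c = (\<lambda>v. mono1 i a v + mono1 j b v + mono1 l c v)"

definition L_gens :: "nat \<Rightarrow> nat \<Rightarrow> (nat \<Rightarrow> nat) set" where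
  "L_gens r k =
     {mono1 i 2 | i. odd i \<and> k \<le> i}
   \<union> {mono2 i 1 (i + 1) (r - 1) | i. odd i \<and> k \<le> i}
   \<union> {mono2 i (r - n) (i + 2) n | i n. even i \<and> k \<le> i \<and> n \<le> r - 1}
   \<union> {mono3 i (r - n - 1) (i + 1) 1 (i + 2) n | i n. even i \<and> k \<le> i \<and> n \<le> r - 2}"

definition Lell_gens_even :: "nat \<Rightarrow> nat \<Rightarrow> nat \<Rightarrow> (nat \<Rightarrow> nat) set" where
  "Lell_gens_even r l k =
     {mono1 k l}
   \<union> {mono2 k (l - t) (k + 2) (r - l + t) | t. 1 \<le> t \<and> t \<le> l - 1}
   \<union> {mono3 k (l - t) (k + 1) 1 (k + 2) (r - l + t - 1) | t. 1 \<le> t \<and> t \<le> l - 1}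
   \<union> L_gens r (k + 1)"

definition Lell_gens :: "nat \<Rightarrow> nat \<Rightarrow> nat \<Rightarrow> (nat \<Rightarrow> nat) set" where
  "Lell_gens r l k =
     (if even k then Lell_gens_even r l k
      else {mono1 k 2, mono2 k 1 (k + 1) (l - 1)} \<union> Lell_gens_even r l (k + 1))"

definition in_mono_ideal :: "(nat \<Rightarrow> nat) set \<Rightarrow> (nat \<Rightarrow> nat) \<Rightarrow> bool" where
  "in_mono_ideal G m \<longleftrightarrow> (\<exists>g\<in>G. \<forall>i. g i \<le> m i)"

text \<open>Hilbert--Poincare series of S_k / L_k^l over the field 'a: the dimension of the
  weight-j component of a quotient by a monomial ideal is the number of monomials of
  weight j (in S_k) not lying in the ideal.\<close>
definition HP :: "nat \<Rightarrow> nat \<Rightarrow> nat \<Rightarrow> 'a::field fps" where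
  "HP r l k = Abs_fps (\<lambda>j. of_nat (card {m. monomial_in k m \<and> weight m = j
                                   \<and> \<not> in_mono_ideal (Lell_gens r l k) m}))"

end

(* For odd k, write a monomial of S_k as x_k^e x_(k+1)^a m' with m' in S_(k+2).  Unfolding the
   generators of L_k^l down to L_(k+4), one finds that it lies outside L_k^l exactly when x_k^e x_(k+1)^a
   avoids (x_k^2, x_k x_(k+1)^(l-1), x_(k+1)^l), i.e. e = 0, a < l or e = 1, a < l - 1, and m' lies
   outside L_(k+2)^(r-a): dividing out x_(k+1)^a turns the generators x_(k+1)^(l-t) x_(k+3)^(r-l+t) and
   x_(k+1)^(l-t) x_(k+2) x_(k+3)^(r-l+t-1), together with those of L_(k+2), into the generators of
   L_(k+2)^(r-a).  So the standard monomials of S_k/L_k^l are the disjoint union over (e, a) of shifted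
   copies of those of S_(k+2)/L_(k+2)^(r-a), contributing q^(ke+(k+1)a) HP^(k+2)_(r-a) each; with
   j = a + 1 the terms e = 1 and e = 0 are the two sums.  Neither J nor the characteristic plays a role. *)

theory Submission
  imports Defs
begin

unbundle fps_syntax

lemma in_mono_ideal_Un:
  "in_mono_ideal (A \<union> B) m \<longleftrightarrow> in_mono_ideal A m \<or> in_mono_ideal B m"
  unfolding in_mono_ideal_def by blast

lemma in_mono_ideal_singleton_iff: "in_mono_ideal {g} m \<longleftrightarrow> (\<forall>v. g v \<le> m v)"
  unfolding in_mono_ideal_def by blast

lemma in_mono_ideal_insert_iff:
  "in_mono_ideal (insert g G) m \<longleftrightarrow> (\<forall>v. g v \<le> m v) \<or> in_mono_ideal G m"
  unfolding in_mono_ideal_def by blast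

lemma mono1_dvd_iff: "(\<forall>v. mono1 i a v \<le> m v) \<longleftrightarrow> a \<le> m i"
  unfolding mono1_def by (metis le0 order_refl)

lemma mono2_dvd_iff:
  "i \<noteq> j \<Longrightarrow> (\<forall>v. mono2 i a j b v \<le> m v) \<longleftrightarrow> a \<le> m i \<and> b \<le> m j"
  unfolding mono2_def mono1_def by (auto split: if_splits)

lemma mono3_dvd_iff:
  "i \<noteq> j \<Longrightarrow> i \<noteq> l \<Longrightarrow> j \<noteq> l \<Longrightarrow>
   (\<forall>v. mono3 i a j b l c v \<le> m v) \<longleftrightarrow> a \<le> m i \<and> b \<le> m j \<and> c \<le> m l"
  unfolding mono3_def mono1_def by (auto split: if_splits)

lemma in_mono_ideal_family_iff:
  "in_mono_ideal {g x |x. P x} m \<longleftrightarrow> (\<exists>x. P x \<and> (\<forall>v. g x v \<le> m v))"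
  unfolding in_mono_ideal_def by blast

lemma in_mono_ideal_family2_iff:
  "in_mono_ideal {g x y |x y. P x y} m \<longleftrightarrow> (\<exists>x y. P x y \<and> (\<forall>v. g x y v \<le> m v))"
  unfolding in_mono_ideal_def by blast

lemma in_L_gens_iff:
  "in_mono_ideal (L_gens r k) m \<longleftrightarrow>
     (\<exists>i. odd i \<and> k \<le> i \<and> 2 \<le> m i) \<or>
     (\<exists>i. odd i \<and> k \<le> i \<and> 1 \<le> m i \<and> r - 1 \<le> m (i + 1)) \<or>
     (\<exists>i. even i \<and> k \<le> i \<and> (\<exists>n. n \<le> r - 1 \<and> r - n \<le> m i \<and> n \<le> m (i + 2))) \<or>
     (\<exists>i. even i \<and> k \<le> i \<and>
        (\<exists>n. n \<le> r - 2 \<and> r - n - 1 \<le> m i \<and> 1 \<le> m (i + 1) \<and> n \<le> m (i + 2)))"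
  unfolding L_gens_def in_mono_ideal_Un in_mono_ideal_family_iff in_mono_ideal_family2_iff
  by (simp add: mono1_dvd_iff mono2_dvd_iff mono3_dvd_iff)

lemma ex_ge_unfold:
  "(\<exists>i. P i \<and> k \<le> i \<and> Q i) \<longleftrightarrow> (P k \<and> Q k) \<or> (\<exists>i. P i \<and> k + 1 \<le> i \<and> Q i)" for k :: nat
  by (metis Suc_eq_plus1 Suc_le_eq nless_le order_refl)

lemma in_L_gens_unfold:
  "in_mono_ideal (L_gens r k) m \<longleftrightarrow>
     (odd k \<and> 2 \<le> m k) \<or>
     (odd k \<and> 1 \<le> m k \<and> r - 1 \<le> m (k + 1)) \<or>
     (even k \<and> (\<exists>n. n \<le> r - 1 \<and> r - n \<le> m k \<and> n \<le> m (k + 2))) \<or>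
     (even k \<and> (\<exists>n. n \<le> r - 2 \<and> r - n - 1 \<le> m k \<and> 1 \<le> m (k + 1) \<and> n \<le> m (k + 2))) \<or>
     in_mono_ideal (L_gens r (k + 1)) m"
  unfolding in_L_gens_iff[of r k] in_L_gens_iff[of r "k + 1"] ex_ge_unfold[of _ k] by blast

lemma in_L_gens_cong:
  "(\<And>i. k \<le> i \<Longrightarrow> m i = m' i) \<Longrightarrow> in_mono_ideal (L_gens r k) m = in_mono_ideal (L_gens r k) m'"
  unfolding in_L_gens_iff by (simp cong: conj_cong)

lemma in_L_gens_odd_iff:
  assumes "odd k"
  shows "in_mono_ideal (L_gens r k) m \<longleftrightarrow>
    2 \<le> m k \<or> (1 \<le> m k \<and> r - 1 \<le> m (k + 1)) \<or> in_mono_ideal (L_gens r (k + 1)) m"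
  using assms unfolding in_L_gens_unfold[of r k] by simp

lemma in_L_gens_even_iff:
  assumes "even k" and "2 \<le> r"
  shows "in_mono_ideal (L_gens r k) m \<longleftrightarrow>
    (1 \<le> m k \<and> r \<le> m k + m (k + 2)) \<or>
    (1 \<le> m k \<and> 1 \<le> m (k + 1) \<and> r \<le> m k + m (k + 2) + 1) \<or>
    in_mono_ideal (L_gens r (k + 1)) m"
proof -
  have two_factors: "(\<exists>n. n \<le> r - 1 \<and> r - n \<le> x \<and> n \<le> y) \<longleftrightarrow> 1 \<le> x \<and> r \<le> x + y"
    for x y :: nat
  proof
    assume "1 \<le> x \<and> r \<le> x + y"
    then show "\<exists>n. n \<le> r - 1 \<and> r - n \<le> x \<and> n \<le> y"
      by (intro exI[of _ "r - min x r"]) arith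
  qed (use assms(2) in \<open>elim exE; arith\<close>)
  have three_factors:
    "(\<exists>n. n \<le> r - 2 \<and> r - n - 1 \<le> x \<and> 1 \<le> z \<and> n \<le> y) \<longleftrightarrow> 1 \<le> x \<and> 1 \<le> z \<and> r \<le> x + y + 1"
    for x y z :: nat
  proof
    assume "1 \<le> x \<and> 1 \<le> z \<and> r \<le> x + y + 1"
    then show "\<exists>n. n \<le> r - 2 \<and> r - n - 1 \<le> x \<and> 1 \<le> z \<and> n \<le> y"
      using assms(2) by (intro exI[of _ "r - 1 - min x (r - 1)"]) arith
  qed (use assms(2) in \<open>elim exE; arith\<close>)
  show ?thesis
    using assms(1) unfolding in_L_gens_unfold[of r k] two_factors three_factors by simp
qed

lemma in_Lell_gens_even_iff:
  assumes "l \<le> r"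
  shows "in_mono_ideal (Lell_gens_even r l k) m \<longleftrightarrow>
    l \<le> m k \<or>
    (2 \<le> l \<and> 1 \<le> m k \<and> r - l + 1 \<le> m (k + 2) \<and> r \<le> m k + m (k + 2)) \<or>
    (2 \<le> l \<and> 1 \<le> m k \<and> 1 \<le> m (k + 1) \<and> r - l \<le> m (k + 2) \<and> r \<le> m k + m (k + 2) + 1) \<or>
    in_mono_ideal (L_gens r (k + 1)) m"
proof -
  have two_factors:
    "(\<exists>t. 1 \<le> t \<and> t \<le> l - 1 \<and> l - t \<le> x \<and> r - l + t \<le> y) \<longleftrightarrow>
     2 \<le> l \<and> 1 \<le> x \<and> r - l + 1 \<le> y \<and> r \<le> x + y" for x y :: nat
  proof
    assume "2 \<le> l \<and> 1 \<le> x \<and> r - l + 1 \<le> y \<and> r \<le> x + y"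
    then show "\<exists>t. 1 \<le> t \<and> t \<le> l - 1 \<and> l - t \<le> x \<and> r - l + t \<le> y"
      using assms by (intro exI[of _ "max 1 (l - x)"]) arith
  qed (use assms in \<open>elim exE; arith\<close>)
  have three_factors:
    "(\<exists>t. 1 \<le> t \<and> t \<le> l - 1 \<and> l - t \<le> x \<and> 1 \<le> z \<and> r - l + t - 1 \<le> y) \<longleftrightarrow>
     2 \<le> l \<and> 1 \<le> x \<and> 1 \<le> z \<and> r - l \<le> y \<and> r \<le> x + y + 1" for x y z :: nat
  proof
    assume "2 \<le> l \<and> 1 \<le> x \<and> 1 \<le> z \<and> r - l \<le> y \<and> r \<le> x + y + 1"
    then show "\<exists>t. 1 \<le> t \<and> t \<le> l - 1 \<and> l - t \<le> x \<and> 1 \<le> z \<and> r - l + t - 1 \<le> y"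
      using assms by (intro exI[of _ "max 1 (l - x)"]) arith
  qed (use assms in \<open>elim exE; arith\<close>)
  have "in_mono_ideal (Lell_gens_even r l k) m \<longleftrightarrow>
    l \<le> m k \<or>
    (\<exists>t. 1 \<le> t \<and> t \<le> l - 1 \<and> l - t \<le> m k \<and> r - l + t \<le> m (k + 2)) \<or>
    (\<exists>t. 1 \<le> t \<and> t \<le> l - 1 \<and> l - t \<le> m k \<and> 1 \<le> m (k + 1) \<and> r - l + t - 1 \<le> m (k + 2)) \<or>
    in_mono_ideal (L_gens r (k + 1)) m"
    unfolding Lell_gens_even_def in_mono_ideal_Un in_mono_ideal_family_iff in_mono_ideal_singleton_iff
    by (simp add: mono1_dvd_iff mono2_dvd_iff mono3_dvd_iff)
  then show ?thesis
    unfolding two_factors three_factors .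
qed

lemma in_Lell_gens_odd_iff:
  assumes "odd k"
  shows "in_mono_ideal (Lell_gens r l k) m \<longleftrightarrow>
    2 \<le> m k \<or> (1 \<le> m k \<and> l - 1 \<le> m (k + 1)) \<or> in_mono_ideal (Lell_gens_even r l (k + 1)) m"
  using assms unfolding Lell_gens_def
  by (simp add: in_mono_ideal_insert_iff mono1_dvd_iff mono2_dvd_iff)

(* a, ..., e are the exponents of x_(k+1), ..., x_(k+5); left: the conditions of L_(k+1)^l and L_(k+2)
   beyond those on x_k, x_(k+1) alone; right: those of L_(k+2)^(r-a), both down to L_(k+4). *)
lemma tail_generators_iff:
  fixes a b c d e :: nat
  assumes "2 \<le> r" and "a < l" and "l \<le> r"
  shows "(2 \<le> l \<and> 1 \<le> a \<and> r - l + 1 \<le> c \<and> r \<le> a + c) \<or>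
         (2 \<le> l \<and> 1 \<le> a \<and> 1 \<le> b \<and> r - l \<le> c \<and> r \<le> a + c + 1) \<or>
         2 \<le> b \<or> (1 \<le> b \<and> r - 1 \<le> c) \<or>
         (1 \<le> c \<and> r \<le> c + e) \<or>
         (1 \<le> c \<and> 1 \<le> d \<and> r \<le> c + e + 1)
     \<longleftrightarrow> 2 \<le> b \<or> (1 \<le> b \<and> r - a - 1 \<le> c) \<or> r - a \<le> c \<or>
         (2 \<le> r - a \<and> 1 \<le> c \<and> r - (r - a) + 1 \<le> e \<and> r \<le> c + e) \<or>
         (2 \<le> r - a \<and> 1 \<le> c \<and> 1 \<le> d \<and> r - (r - a) \<le> e \<and> r \<le> c + e + 1)"
  using assms by (intro iffI; elim disjE) presburger+

(* The exponent pairs (e, a) with x_k^e x_(k+1)^a outside (x_k^2, x_k x_(k+1)^(l-1), x_(k+1)^l). *)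
definition head_exponents :: "nat \<Rightarrow> (nat \<times> nat) set" where
  "head_exponents l = {0} \<times> {..<l} \<union> {1} \<times> {..<l - 1}"

lemma not_in_Lell_gens_odd_iff:
  fixes m :: "nat \<Rightarrow> nat"
  assumes "2 \<le> r" and "1 \<le> l" and "l \<le> r" and "odd k"
  shows "\<not> in_mono_ideal (Lell_gens r l k) m \<longleftrightarrow>
    (m k, m (k + 1)) \<in> head_exponents l \<and>
    \<not> in_mono_ideal (Lell_gens r (r - m (k + 1)) (k + 2)) (m(k := 0, k + 1 := 0))"
proof -
  define m' where "m' = m(k := 0, k + 1 := 0)"
  have parity: "even (k + 1)" "odd (k + 2)" "even (k + 3)"
    using \<open>odd k\<close> by auto
  have m'_eq: "m' (k + 2) = m (k + 2)" "m' (k + 3) = m (k + 3)" "m' (k + 4) = m (k + 4)"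
    "m' (k + 5) = m (k + 5)"
    unfolding m'_def by auto
  have index_sums: "k + 1 + 1 = k + 2" "k + 1 + 2 = k + 3" "k + 2 + 1 = k + 3" "k + 3 + 1 = k + 4"
    "k + 3 + 2 = k + 5"
    by simp_all
  have far_tail: "in_mono_ideal (L_gens r (k + 4)) m' = in_mono_ideal (L_gens r (k + 4)) m"
    unfolding m'_def by (rule in_L_gens_cong) auto
  have lhs: "in_mono_ideal (Lell_gens r l k) m \<longleftrightarrow>
     2 \<le> m k \<or> (1 \<le> m k \<and> l - 1 \<le> m (k + 1)) \<or> l \<le> m (k + 1) \<or>
     (2 \<le> l \<and> 1 \<le> m (k + 1) \<and> r - l + 1 \<le> m (k + 3) \<and> r \<le> m (k + 1) + m (k + 3)) \<or>
     (2 \<le> l \<and> 1 \<le> m (k + 1) \<and> 1 \<le> m (k + 2) \<and> r - l \<le> m (k + 3) \<and>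
        r \<le> m (k + 1) + m (k + 3) + 1) \<or>
     2 \<le> m (k + 2) \<or> (1 \<le> m (k + 2) \<and> r - 1 \<le> m (k + 3)) \<or>
     (1 \<le> m (k + 3) \<and> r \<le> m (k + 3) + m (k + 5)) \<or>
     (1 \<le> m (k + 3) \<and> 1 \<le> m (k + 4) \<and> r \<le> m (k + 3) + m (k + 5) + 1) \<or>
     in_mono_ideal (L_gens r (k + 4)) m"
    by (simp only: in_Lell_gens_odd_iff[OF \<open>odd k\<close>] in_Lell_gens_even_iff[OF \<open>l \<le> r\<close>] index_sums
        in_L_gens_odd_iff[OF parity(2)] in_L_gens_even_iff[OF parity(3) \<open>2 \<le> r\<close>])
  have rhs: "in_mono_ideal (Lell_gens r (r - m (k + 1)) (k + 2)) m' \<longleftrightarrow>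
     2 \<le> m (k + 2) \<or> (1 \<le> m (k + 2) \<and> r - m (k + 1) - 1 \<le> m (k + 3)) \<or>
     r - m (k + 1) \<le> m (k + 3) \<or>
     (2 \<le> r - m (k + 1) \<and> 1 \<le> m (k + 3) \<and> r - (r - m (k + 1)) + 1 \<le> m (k + 5) \<and>
        r \<le> m (k + 3) + m (k + 5)) \<or>
     (2 \<le> r - m (k + 1) \<and> 1 \<le> m (k + 3) \<and> 1 \<le> m (k + 4) \<and> r - (r - m (k + 1)) \<le> m (k + 5) \<and>
        r \<le> m (k + 3) + m (k + 5) + 1) \<or>
     in_mono_ideal (L_gens r (k + 4)) m"
    by (simp only: in_Lell_gens_odd_iff[OF parity(2)] in_Lell_gens_even_iff[OF diff_le_self] index_sums
        m'_eq far_tail)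
  have head_iff: "\<not> (2 \<le> m k \<or> (1 \<le> m k \<and> l - 1 \<le> m (k + 1)) \<or> l \<le> m (k + 1)) \<longleftrightarrow>
      (m k, m (k + 1)) \<in> head_exponents l"
    unfolding head_exponents_def by auto
  show ?thesis
  proof (cases "(m k, m (k + 1)) \<in> head_exponents l")
    case True
    then have "m (k + 1) < l"
      unfolding head_exponents_def by auto
    from tail_generators_iff[where b = "m (k + 2)" and c = "m (k + 3)" and d = "m (k + 4)"
        and e = "m (k + 5)", OF \<open>2 \<le> r\<close> this \<open>l \<le> r\<close>]
    show ?thesis
      unfolding m'_def[symmetric] lhs rhs head_iff[symmetric] by argo
  next
    case False
    then show ?thesis
      unfolding lhs using head_iff by blast
  qed
qed

lemma monomial_in_upd: "monomial_in k m \<Longrightarrow> k \<le> i \<Longrightarrow> monomial_in k (m(i := c))"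
  unfolding monomial_in_def
  by (auto intro: finite_subset[of _ "insert i {v. m v \<noteq> 0}"])

lemma monomial_in_add_two_iff:
  "monomial_in (k + 2) m \<longleftrightarrow> monomial_in k m \<and> m k = 0 \<and> m (k + 1) = 0"
  unfolding monomial_in_def by (metis Suc_leD add_2_eq_Suc' not_less_eq_eq order_eq_iff Suc_eq_plus1)

lemma weight_eq_sum_superset:
  "finite S \<Longrightarrow> {i. m i \<noteq> 0} \<subseteq> S \<Longrightarrow> weight m = (\<Sum>i\<in>S. i * m i)"
  unfolding weight_def by (rule sum.mono_neutral_left) auto

lemma weight_upd_zero:
  assumes "finite {v. m v \<noteq> 0}" and "m i = 0"
  shows "weight (m(i := c)) = weight m + i * c"
proof -
  let ?S = "{v. m v \<noteq> 0}"
  have "weight (m(i := c)) = (\<Sum>v\<in>insert i ?S. v * (m(i := c)) v)"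
    by (rule weight_eq_sum_superset) (use assms(1) in auto)
  also have "\<dots> = i * c + (\<Sum>v\<in>?S. v * (m(i := c)) v)"
    using assms by (simp add: sum.insert)
  also have "\<dots> = i * c + weight m"
    unfolding weight_def using assms(2) by (intro arg_cong[where f = "(+) (i * c)"] sum.cong) auto
  finally show ?thesis by simp
qed

lemma finite_monomials_of_weight:
  assumes "1 \<le> k"
  shows "finite {m. monomial_in k m \<and> weight m = n}"
proof (rule finite_subset)
  show "finite {f. \<forall>i. (i \<in> {..n} \<longrightarrow> f i \<in> {..n}) \<and> (i \<notin> {..n} \<longrightarrow> f i = (0::nat))}"
    by (rule finite_set_of_finite_funs) auto
  have "(i \<le> n \<longrightarrow> m i \<le> n) \<and> (\<not> i \<le> n \<longrightarrow> m i = 0)"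
    if "monomial_in k m" "weight m = n" for m i
  proof (cases "m i = 0")
    case False
    have "i * m i \<le> n"
      unfolding that(2)[symmetric] weight_def
      by (rule member_le_sum) (use that(1) False in \<open>auto simp: monomial_in_def\<close>)
    moreover have "1 \<le> i"
      using that(1) assms False unfolding monomial_in_def by fastforce
    moreover have "i \<le> i * m i" "m i \<le> i * m i"
      using \<open>1 \<le> i\<close> False by simp_all
    ultimately show ?thesis by linarith
  qed simp
  then show "{m. monomial_in k m \<and> weight m = n} \<subseteq>
      {f. \<forall>i. (i \<in> {..n} \<longrightarrow> f i \<in> {..n}) \<and> (i \<notin> {..n} \<longrightarrow> f i = 0)}"
    by auto
qed

definition weight_series :: "(nat \<Rightarrow> nat) set \<Rightarrow> 'a::comm_semiring_1 fps" where
  "weight_series M = Abs_fps (\<lambda>n. of_nat (card {m \<in> M. weight m = n}))"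

lemma weight_series_UN_disjoint:
  assumes "finite I"
    and "\<And>i n. i \<in> I \<Longrightarrow> finite {m \<in> M i. weight m = n}"
    and "\<And>i j. i \<in> I \<Longrightarrow> j \<in> I \<Longrightarrow> i \<noteq> j \<Longrightarrow> M i \<inter> M j = {}"
  shows "weight_series (\<Union>i\<in>I. M i) = (\<Sum>i\<in>I. weight_series (M i))"
proof (rule fps_ext)
  fix n
  have "{m \<in> (\<Union>i\<in>I. M i). weight m = n} = (\<Union>i\<in>I. {m \<in> M i. weight m = n})"
    by blast
  then have "card {m \<in> (\<Union>i\<in>I. M i). weight m = n} = (\<Sum>i\<in>I. card {m \<in> M i. weight m = n})"
    using assms by (simp add: card_UN_disjoint disjoint_iff)
  then show "weight_series (\<Union>i\<in>I. M i) $ n = (\<Sum>i\<in>I. weight_series (M i)) $ n"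
    by (simp add: weight_series_def fps_sum_nth)
qed

lemma weight_series_shift:
  fixes c d :: nat
  assumes "i \<noteq> j" and "\<And>m. m \<in> M \<Longrightarrow> finite {v. m v \<noteq> 0} \<and> m i = 0 \<and> m j = 0"
  shows "weight_series ((\<lambda>m. m(i := c, j := d)) ` M) = fps_X ^ (i * c + j * d) * weight_series M"
proof (rule fps_ext)
  fix n
  let ?shift = "\<lambda>m. m(i := c, j := d)" and ?w = "i * c + j * d"
  have weight_shift: "weight (?shift m) = weight m + ?w" if "m \<in> M" for m
  proof -
    have m: "finite {v. m v \<noteq> 0}" "m i = 0" "m j = 0"
      using assms(2)[OF that] by auto
    then have "finite {v. (m(i := c)) v \<noteq> 0}"
      by (auto intro: finite_subset[of _ "insert i {v. m v \<noteq> 0}"])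
    then have "weight (?shift m) = weight (m(i := c)) + j * d"
      using assms(1) m(3) by (intro weight_upd_zero) auto
    also have "\<dots> = weight m + ?w"
      using m(1,2) by (simp add: weight_upd_zero)
    finally show ?thesis .
  qed
  have "inj_on ?shift M"
  proof (rule inj_on_inverseI)
    show "(?shift m)(i := 0, j := 0) = m" if "m \<in> M" for m
      using assms(2)[OF that] by (auto simp: fun_eq_iff)
  qed
  have "{m \<in> ?shift ` M. weight m = n} = ?shift ` {m \<in> M. weight m + ?w = n}"
    using weight_shift by (auto simp: image_iff)
  then have "card {m \<in> ?shift ` M. weight m = n} = card {m \<in> M. weight m + ?w = n}"
    using \<open>inj_on ?shift M\<close> by (simp add: card_image inj_on_subset)
  also have "\<dots> = (if n < ?w then 0 else card {m \<in> M. weight m = n - ?w})"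
    by (auto intro: arg_cong[where f = card])
  finally show "weight_series (?shift ` M) $ n = (fps_X ^ ?w * weight_series M) $ n"
    by (simp add: weight_series_def fps_X_power_mult_nth)
qed

definition standard_monomials :: "nat \<Rightarrow> nat \<Rightarrow> nat \<Rightarrow> (nat \<Rightarrow> nat) set" where
  "standard_monomials r l k = {m. monomial_in k m \<and> \<not> in_mono_ideal (Lell_gens r l k) m}"

lemma HP_eq_weight_series: "HP r l k = weight_series (standard_monomials r l k)"
  unfolding HP_def weight_series_def standard_monomials_def by (simp add: conj_commute conj_left_commute)

lemma standard_monomials_odd:
  assumes "2 \<le> r" and "1 \<le> l" and "l \<le> r" and "odd k"
  shows "standard_monomials r l k =
    (\<Union>(e, a)\<in>head_exponents l. (\<lambda>m. m(k := e, k + 1 := a)) ` standard_monomials r (r - a) (k + 2))"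
    (is "_ = ?U")
proof
  show "standard_monomials r l k \<subseteq> ?U"
  proof
    fix m assume "m \<in> standard_monomials r l k"
    then have m: "monomial_in k m" "\<not> in_mono_ideal (Lell_gens r l k) m"
      unfolding standard_monomials_def by auto
    let ?m' = "m(k := 0, k + 1 := 0)"
    have "monomial_in (k + 2) ?m'"
      unfolding monomial_in_add_two_iff using m(1) by (simp add: monomial_in_upd)
    moreover have "m = ?m'(k := m k, k + 1 := m (k + 1))"
      by simp
    ultimately show "m \<in> ?U"
      using m(2) not_in_Lell_gens_odd_iff[OF assms] unfolding standard_monomials_def
      by blast
  qed
next
  show "?U \<subseteq> standard_monomials r l k"
  proof clarify
    fix e a m'
    assume head: "(e, a) \<in> head_exponents l" and m': "m' \<in> standard_monomials r (r - a) (k + 2)"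
    let ?m = "m'(k := e, k + 1 := a)"
    have "monomial_in k m'" "m' k = 0" "m' (k + 1) = 0"
      using m' unfolding standard_monomials_def monomial_in_add_two_iff by auto
    then have "monomial_in k ?m" and "?m(k := 0, k + 1 := 0) = m'"
      by (auto simp: monomial_in_upd fun_eq_iff)
    then show "?m \<in> standard_monomials r l k"
      using head m' not_in_Lell_gens_odd_iff[OF assms, of ?m] unfolding standard_monomials_def
      by simp
  qed
qed

lemma HP_odd_expansion:
  assumes "2 \<le> r" and "1 \<le> l" and "l \<le> r" and "odd k"
  shows "HP r l k =
    (\<Sum>(e, a)\<in>head_exponents l. fps_X ^ (k * e + (k + 1) * a) * HP r (r - a) (k + 2))"
proof -
  have "1 \<le> k"
    using \<open>odd k\<close> by (cases k) auto
  have finite_slices: "finite {m \<in> (\<lambda>m. m(k := e, k + 1 := a)) ` standard_monomials r (r - a) (k + 2).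
      weight m = n}" for e a n
  proof (rule finite_subset[OF _ finite_monomials_of_weight[OF \<open>1 \<le> k\<close>, of n]])
    show "{m \<in> (\<lambda>m. m(k := e, k + 1 := a)) ` standard_monomials r (r - a) (k + 2). weight m = n}
        \<subseteq> {m. monomial_in k m \<and> weight m = n}"
      unfolding standard_monomials_def monomial_in_add_two_iff by (auto simp: monomial_in_upd)
  qed
  have shift_determines_head: "p = q"
    if "m(k := fst p, k + 1 := snd p) = m'(k := fst q, k + 1 := snd q)"
    for m m' :: "nat \<Rightarrow> nat" and p q :: "nat \<times> nat"
    using fun_cong[OF that, of k] fun_cong[OF that, of "k + 1"] by (simp add: prod_eq_iff)
  have "HP r l k = (\<Sum>(e, a)\<in>head_exponents l.
      weight_series ((\<lambda>m. m(k := e, k + 1 := a)) ` standard_monomials r (r - a) (k + 2)))"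
    unfolding HP_eq_weight_series[of r l k] standard_monomials_odd[OF assms] split_def
  proof (rule weight_series_UN_disjoint)
    show "finite (head_exponents l)"
      unfolding head_exponents_def by simp
  qed (rule finite_slices, blast dest: shift_determines_head)
  also have "\<dots> = (\<Sum>(e, a)\<in>head_exponents l. fps_X ^ (k * e + (k + 1) * a) * HP r (r - a) (k + 2))"
    unfolding HP_eq_weight_series
    by (intro sum.cong refl, clarify, rule weight_series_shift)
      (auto simp: standard_monomials_def monomial_in_add_two_iff monomial_in_def)
  finally show ?thesis .
qed

lemma sum_head_exponents:
  "(\<Sum>p\<in>head_exponents l. g p) = (\<Sum>a<l. g (0, a)) + (\<Sum>a<l - 1. g (1, a))"
proof -
  have "(\<Sum>p\<in>head_exponents l. g p) = (\<Sum>p\<in>{0} \<times> {..<l}. g p) + (\<Sum>p\<in>{1} \<times> {..<l - 1}. g p)"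
    unfolding head_exponents_def by (rule sum.union_disjoint) auto
  then show ?thesis
    by (simp add: sum.cartesian_product')
qed

theorem lemma2p1:
  fixes J r l k :: nat
  assumes "r \<ge> 2" and "1 \<le> l" and "l \<le> r"
    and "odd k" and "k \<ge> 2 * J + 1"
  shows "(HP r l k :: 'a::field_char_0 fps) =
           (\<Sum>j=1..l-1. fps_X ^ ((k + 1) * j - 1) * HP r (r - j + 1) (k + 2))
         + (\<Sum>j=1..l. fps_X ^ ((k + 1) * (j - 1)) * HP r (r - j + 1) (k + 2))"
proof -
  let ?term = "\<lambda>e a. fps_X ^ (k * e + (k + 1) * a) * (HP r (r - a) (k + 2) :: 'a fps)"
  have from_one: "(\<Sum>j=1..n. f j) = (\<Sum>a<n. f (Suc a))" for f :: "nat \<Rightarrow> 'a fps" and n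
    using sum.atLeast1_atMost_eq[of f n] by simp
  have x_k_terms: "(\<Sum>j=1..l-1. fps_X ^ ((k + 1) * j - 1) * HP r (r - j + 1) (k + 2)) =
      (\<Sum>a<l-1. ?term 1 a)"
    unfolding from_one using \<open>l \<le> r\<close> by (intro sum.cong) (auto simp: Suc_diff_Suc)
  have no_x_k_terms: "(\<Sum>j=1..l. fps_X ^ ((k + 1) * (j - 1)) * HP r (r - j + 1) (k + 2)) =
      (\<Sum>a<l. ?term 0 a)"
    unfolding from_one using \<open>l \<le> r\<close> by (intro sum.cong) (auto simp: Suc_diff_Suc)
  have "HP r l k = (\<Sum>a<l. ?term 0 a) + (\<Sum>a<l-1. ?term 1 a)"
    unfolding HP_odd_expansion[OF assms(1-4)] sum_head_exponents by simp
  then show ?thesis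
    unfolding x_k_terms no_x_k_terms by (simp only: add.commute)
qed

end
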